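(* Let $(X,A,Y)$ be jointly distributed with $A,Y\in\{0,1\}$, and assume there exist deterministic functions $f_Y^*,f_A^*$ with $Y=f_Y^*(X)$ and $A=f_A^*(X)$. Define $\Delta_{Y\mid A}:=|\Pr(Y=1\mid A=0)-\Pr(Y=1\mid A=1)|$. Then, maximizing over all (possibly randomized) representations $Z=g(X)$, $$\max_{Z:\ I(A;Z)=0} I(Y;Z)=H(Y)-\Delta_{Y\mid A}\cdot H(A).$$
   Context: A (possibly randomized) representation is $Z=g(X,S)$ for a measurable $g$ and auxiliary randomness $S$ independent of $(X,A,Y)$. $H$ denotes Shannon entropy and $I$ mutual information. *)

theory Defs
  imports "HOL-Probability.Probability"
begin

text \<open>A (possibly randomized) representation Z = g(X,S) of a random variable X whose
  law is the probability measure PX: a probability space M carrying X (with law PX)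
  and auxiliary randomness S (values in MSa) independent of X, together with a
  measurable map g. (A and Y are deterministic functions of X, so independence of S
  from X is independence from (X,A,Y).)\<close>
definition is_rep ::
  "'x measure \<Rightarrow> 'm measure \<Rightarrow> ('m \<Rightarrow> 'x) \<Rightarrow> 's measure \<Rightarrow> ('m \<Rightarrow> 's)
     \<Rightarrow> 'z measure \<Rightarrow> ('x \<times> 's \<Rightarrow> 'z) \<Rightarrow> bool" where
  "is_rep PX M X MSa S MZ g \<longleftrightarrow>
     prob_space M \<and> X \<in> measurable M PX \<and> distr M PX X = PX \<and>
     S \<in> measurable M MSa \<and> prob_space.indep_set M
       (sigma_sets (space M) {X -` B \<inter> space M | B. B \<in> sets PX})
       (sigma_sets (space M) {S -` B \<inter> space M | B. B \<in> sets MSa}) \<and>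
     g \<in> measurable (PX \<Otimes>\<^sub>M MSa) MZ"

definition MI_rep ::
  "'m measure \<Rightarrow> ('m \<Rightarrow> 'x) \<Rightarrow> ('m \<Rightarrow> 's) \<Rightarrow> 'z measure \<Rightarrow> ('x \<times> 's \<Rightarrow> 'z)
     \<Rightarrow> ('x \<Rightarrow> bool) \<Rightarrow> real" where
  "MI_rep M X S MZ g f =
     prob_space.mutual_information M 2 (count_space UNIV) MZ
       (\<lambda>\<omega>. f (X \<omega>)) (\<lambda>\<omega>. g (X \<omega>, S \<omega>))"

definition H2 :: "'x measure \<Rightarrow> ('x \<Rightarrow> bool) \<Rightarrow> real" where
  "H2 PX f = prob_space.entropy PX 2 (count_space UNIV) f"

definition Delta :: "'x measure \<Rightarrow> ('x \<Rightarrow> bool) \<Rightarrow> ('x \<Rightarrow> bool) \<Rightarrow> real" where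
  "Delta PX fA fY =
     \<bar>measure PX {x \<in> space PX. fY x \<and> \<not> fA x} / measure PX {x \<in> space PX. \<not> fA x}
      - measure PX {x \<in> space PX. fY x \<and> fA x} / measure PX {x \<in> space PX. fA x}\<bar>"

end

theory Submission
  imports Defs
begin

text \<open>
  Write h for the binary entropy and, for an event U, let P(U | Z) be its conditional probability
  given the representation Z. Then I(U; Z) = h(P U) - E h(P(U | Z)). If I(A; Z) = 0, the divergence
  form of this identity forces P(A | Z) = P(A) =: p almost surely, so that
  P(Y | Z) = (1 - p) u + p v with u = P(Y, \<not>A | Z) / (1 - p) and v = P(Y, A | Z) / p.
  Concavity of h gives h((1 - p) u + p v) \<ge> \<bar>u - v\<bar> h(p), and E \<bar>u - v\<bar> \<ge> \<bar>E u - E v\<bar> = \<Delta>,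
  whence I(Y; Z) \<le> H(Y) - \<Delta> H(A).

  For the equality case let a = P(Y | \<not>A), b = P(Y | A) and m = min a b. A variable Z with
  values 3, 2, 1, 0 of probabilities m, a - m, b - m, 1 - max a b independently of A, and such
  that Y holds, Y = \<not>A, Y = A, Y fails on the respective values, can be coupled with (A, Y)
  by a uniform auxiliary variable. Then I(A; Z) = 0 and H(Y | Z) = (a - m + b - m) h(p) = \<Delta> H(A).
\<close>

section \<open>Binary entropy\<close>

definition binary_entropy :: "real \<Rightarrow> real" where
  "binary_entropy q = - (q * log 2 q) - (1 - q) * log 2 (1 - q)"

definition binary_divergence :: "real \<Rightarrow> real \<Rightarrow> real" where
  "binary_divergence q p = q * log 2 (q / p) + (1 - q) * log 2 ((1 - q) / (1 - p))"

lemma binary_entropy_0 [simp]: "binary_entropy 0 = 0"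
  and binary_entropy_1 [simp]: "binary_entropy 1 = 0"
  by (simp_all add: binary_entropy_def)

lemma binary_entropy_one_minus: "binary_entropy (1 - q) = binary_entropy q"
  by (simp add: binary_entropy_def algebra_simps)

lemma mult_ln_ge_tangent:
  fixes x c :: real
  assumes "0 \<le> x" "0 < c"
  shows "x * ln c + x - c \<le> x * ln x"
    and "0 < x \<Longrightarrow> x \<noteq> c \<Longrightarrow> x * ln c + x - c < x * ln x"
proof -
  have eq: "x * ln (c / x) = x * ln c - x * ln x" if "0 < x"
    using that \<open>0 < c\<close> by (simp add: ln_div algebra_simps)
  have "x * (c / x - 1) = c - x" if "0 < x" using that by (simp add: field_simps)
  moreover have "ln (c / x) \<le> c / x - 1" if "0 < x"
    using that \<open>0 < c\<close> by (intro ln_le_minus_one) auto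
  moreover have "ln (c / x) \<noteq> c / x - 1" if "0 < x" "x \<noteq> c"
    using that \<open>0 < c\<close> ln_eq_minus_one[of "c / x"] by (auto simp: field_simps)
  ultimately show "x * ln c + x - c \<le> x * ln x"
    and "0 < x \<Longrightarrow> x \<noteq> c \<Longrightarrow> x * ln c + x - c < x * ln x"
    using assms eq mult_left_mono[of "ln (c / x)" "c / x - 1" x]
      mult_strict_left_mono[of "ln (c / x)" "c / x - 1" x]
    by (cases "x = 0"; force)+
qed

lemma binary_gibbs:
  fixes x c :: real
  assumes "0 \<le> x" "x \<le> 1" "0 < c" "c < 1"
  shows "x * ln c + (1 - x) * ln (1 - c) \<le> x * ln x + (1 - x) * ln (1 - x)"
    and "x \<noteq> c \<Longrightarrow> x * ln c + (1 - x) * ln (1 - c) < x * ln x + (1 - x) * ln (1 - x)"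
proof -
  note x = mult_ln_ge_tangent[of x c] and x' = mult_ln_ge_tangent[of "1 - x" "1 - c"]
  show "x * ln c + (1 - x) * ln (1 - c) \<le> x * ln x + (1 - x) * ln (1 - x)"
    using x(1) x'(1) assms by simp
  show "x \<noteq> c \<Longrightarrow> x * ln c + (1 - x) * ln (1 - c) < x * ln x + (1 - x) * ln (1 - x)"
    using x x' assms by (cases "x = 0") fastforce+
qed

lemma binary_entropy_le_tangent:
  assumes "0 \<le> x" "x \<le> 1" "0 < c" "c < 1"
  shows "binary_entropy x \<le> binary_entropy c + (x - c) * (log 2 (1 - c) - log 2 c)"
proof -
  have "binary_entropy x = - (x * ln x + (1 - x) * ln (1 - x)) / ln 2"
    and "binary_entropy c + (x - c) * (log 2 (1 - c) - log 2 c)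
           = - (x * ln c + (1 - x) * ln (1 - c)) / ln 2"
    by (simp_all add: binary_entropy_def log_def field_simps)
  then show ?thesis
    using binary_gibbs(1)[OF assms] by (simp add: divide_right_mono)
qed

lemma mult_log_le_0: "0 \<le> x \<Longrightarrow> x \<le> 1 \<Longrightarrow> x * log 2 x \<le> 0"
  by (cases "x = 0") (auto intro: mult_nonneg_nonpos)

lemma binary_entropy_nonneg: "0 \<le> q \<Longrightarrow> q \<le> 1 \<Longrightarrow> 0 \<le> binary_entropy q"
  using mult_log_le_0[of q] mult_log_le_0[of "1 - q"] by (simp add: binary_entropy_def)

lemma binary_entropy_le_1: "0 \<le> q \<Longrightarrow> q \<le> 1 \<Longrightarrow> binary_entropy q \<le> 1"
  using binary_entropy_le_tangent[of q "1/2"] by (simp add: binary_entropy_def log_divide)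

lemma binary_entropy_three_point_ge:
  assumes "0 \<le> w1" "0 \<le> w2" "w1 + w2 \<le> 1" "0 \<le> x" "x \<le> 1"
  shows "w2 * binary_entropy x \<le> binary_entropy (w1 + w2 * x)"
proof -
  define m where "m = w1 + w2 * x"
  have "w2 * x \<le> w2" using assms by (simp add: mult_left_le)
  then have m: "0 \<le> m" "m \<le> 1" using assms by (auto simp: m_def)
  show ?thesis
  proof (cases "0 < m \<and> m < 1")
    case True
    define T where "T y = binary_entropy m + (y - m) * (log 2 (1 - m) - log 2 m)" for y
    have tangent: "binary_entropy y \<le> T y" if "0 \<le> y" "y \<le> 1" for y
      unfolding T_def using binary_entropy_le_tangent that True by blast
    \<comment> \<open>m is the barycentre of 1, x, 0 with weights w1, w2, 1 - w1 - w2\<close>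
    have "w1 * T 1 + w2 * T x + (1 - w1 - w2) * T 0 = binary_entropy m"
      by (simp add: T_def m_def algebra_simps)
    moreover have "0 \<le> w1 * T 1" "0 \<le> (1 - w1 - w2) * T 0"
      using tangent[of 1] tangent[of 0] assms by simp_all
    moreover have "w2 * binary_entropy x \<le> w2 * T x"
      using tangent[of x] assms by (simp add: mult_left_mono)
    ultimately show ?thesis by (simp add: m_def)
  next
    case False
    then have "m = 0 \<or> m = 1" using m by auto
    moreover have "w2 * x = 0" if "m = 0"
      using that assms by (simp add: m_def add_nonneg_eq_0_iff)
    moreover have "w2 * (1 - x) = 0" if "m = 1"
    proof -
      have "w2 * (1 - x) = w1 + w2 - m" by (simp add: m_def algebra_simps)
      then show ?thesis using that assms mult_nonneg_nonneg[of w2 "1 - x"] by linarith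
    qed
    ultimately have "w2 = 0 \<or> x = 0 \<or> x = 1" by auto
    then show ?thesis using m by (auto simp: m_def intro: binary_entropy_nonneg)
  qed
qed

lemma binary_entropy_mixture_ge:
  assumes "0 \<le> u" "u \<le> 1" "0 \<le> v" "v \<le> 1" "0 \<le> p" "p \<le> 1"
  shows "\<bar>u - v\<bar> * binary_entropy p \<le> binary_entropy (p * u + (1 - p) * v)"
proof (cases "v \<le> u")
  case True
  have "p * u + (1 - p) * v = v + (u - v) * p" by (simp add: algebra_simps)
  then show ?thesis using binary_entropy_three_point_ge[of v "u - v" p] True assms by simp
next
  case False
  have "p * u + (1 - p) * v = u + (v - u) * (1 - p)" by (simp add: algebra_simps)
  then show ?thesis
    using binary_entropy_three_point_ge[of u "v - u" "1 - p"] False assms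
    by (simp add: binary_entropy_one_minus)
qed

lemma abs_mult_log_div_le:
  assumes "0 \<le> x" "x \<le> 1" "0 \<le> q"
  shows "\<bar>x * log 2 (x / q)\<bar> \<le> 1 + \<bar>log 2 q\<bar>"
proof (cases "x = 0 \<or> q = 0")
  case False
  have "\<bar>x * log 2 x\<bar> \<le> 1"
    using binary_entropy_le_1[of x] mult_log_le_0[of x] mult_log_le_0[of "1 - x"] assms
    by (simp add: binary_entropy_def)
  moreover have "\<bar>x * log 2 q\<bar> \<le> \<bar>log 2 q\<bar>"
    using assms by (simp add: abs_mult mult_left_le_one_le)
  moreover have "x * log 2 (x / q) = x * log 2 x - x * log 2 q"
    using False assms by (simp add: log_divide algebra_simps)
  ultimately show ?thesis by linarith
qed (auto simp: log_def)

lemma binary_divergence_eq: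
  assumes "0 \<le> q" "q \<le> 1" "0 < p" "p < 1"
  shows "binary_divergence q p
           = - binary_entropy q + q * (log 2 (1 - p) - log 2 p) - log 2 (1 - p)"
proof -
  have "q * log 2 (q / p) = q * log 2 q - q * log 2 p"
    using assms by (cases "q = 0") (auto simp: log_divide algebra_simps)
  moreover have "(1 - q) * log 2 ((1 - q) / (1 - p))
                  = (1 - q) * log 2 (1 - q) - (1 - q) * log 2 (1 - p)"
    using assms by (cases "q = 1") (auto simp: log_divide algebra_simps)
  ultimately show ?thesis by (simp add: binary_divergence_def binary_entropy_def algebra_simps)
qed

lemma binary_divergence_nonneg:
  assumes "0 \<le> q" "q \<le> 1" "0 < p" "p < 1"
  shows "0 \<le> binary_divergence q p"
    and "q \<noteq> p \<Longrightarrow> 0 < binary_divergence q p"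
proof -
  have "binary_divergence q p * ln 2
          = q * ln q + (1 - q) * ln (1 - q) - (q * ln p + (1 - q) * ln (1 - p))"
    unfolding binary_divergence_eq[OF assms] by (simp add: binary_entropy_def log_def field_simps)
  then have "0 \<le> binary_divergence q p * ln 2"
    and "q \<noteq> p \<Longrightarrow> 0 < binary_divergence q p * ln 2"
    using binary_gibbs[OF assms] by simp_all
  then show "0 \<le> binary_divergence q p" and "q \<noteq> p \<Longrightarrow> 0 < binary_divergence q p"
    by (simp_all add: zero_le_mult_iff zero_less_mult_iff)
qed

lemma borel_measurable_binary_entropy [measurable]:
  assumes [measurable]: "f \<in> borel_measurable M"
  shows "(\<lambda>x. binary_entropy (f x)) \<in> borel_measurable M"
  unfolding binary_entropy_def by measurable

lemma distributed_bool:
  assumes "prob_space M" and [measurable]: "U \<in> measurable M (count_space UNIV)"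
  shows "distributed M (count_space UNIV) (U :: _ \<Rightarrow> bool)
           (\<lambda>u. ennreal (measure M {\<omega>\<in>space M. U \<omega> = u}))"
  unfolding distributed_def
proof (intro conjI)
  interpret prob_space M by fact
  show "distr M (count_space UNIV) U
          = density (count_space UNIV) (\<lambda>u. ennreal (measure M {\<omega>\<in>space M. U \<omega> = u}))"
    by (rule measure_eqI_finite[where A=UNIV])
      (auto simp: emeasure_distr emeasure_density nn_integral_count_space_finite
         emeasure_eq_measure vimage_def Int_def conj_commute)
qed auto

lemma H2_eq_binary_entropy:
  assumes "prob_space PX" and [measurable]: "f \<in> measurable PX (count_space UNIV)"
  shows "H2 PX f = binary_entropy (measure PX {x\<in>space PX. f x})"
proof -
  interpret information_space PX 2
    by (simp add: information_space_def information_space_axioms_def assms)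
  let ?P = "\<lambda>u. prob {x\<in>space PX. f x = u}"
  have "H2 PX f = - (\<integral>u. ?P u * log 2 (?P u) \<partial>count_space UNIV)"
    unfolding H2_def by (rule entropy_distr[OF distributed_bool[OF assms]]) simp
  also have "\<dots> = - (?P True * log 2 (?P True) + ?P False * log 2 (?P False))"
    by (simp add: lebesgue_integral_count_space_finite UNIV_bool)
  also have "?P False = 1 - prob {x\<in>space PX. f x}"
    using prob_neg[of f] by simp
  finally show ?thesis by (simp add: binary_entropy_def)
qed

section \<open>Conditional probabilities given a random variable\<close>

definition is_cond_prob ::
  "'m measure \<Rightarrow> 'z measure \<Rightarrow> ('m \<Rightarrow> 'z) \<Rightarrow> 'm set \<Rightarrow> ('z \<Rightarrow> real) \<Rightarrow> bool" where
  "is_cond_prob M MZ Z B h \<longleftrightarrow> h \<in> borel_measurable MZ \<and> (\<forall>z. 0 \<le> h z) \<and>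
     (\<forall>E\<in>sets MZ. emeasure M (B \<inter> {\<omega>\<in>space M. Z \<omega> \<in> E})
                    = (\<integral>\<^sup>+z. ennreal (h z) * indicator E z \<partial>distr M MZ Z))"

context
  fixes M :: "'m measure" and MZ :: "'z measure" and Z :: "'m \<Rightarrow> 'z"
  assumes M: "prob_space M" and Z [measurable]: "Z \<in> measurable M MZ"
begin

interpretation prob_space M by (fact M)

interpretation PZ: prob_space "distr M MZ Z" by (rule prob_space_distr) simp

lemma is_cond_prob_exists:
  assumes B [measurable]: "B \<in> sets M"
  obtains h where "is_cond_prob M MZ Z B h"
proof -
  let ?PZ = "distr M MZ Z" and ?N = "distr (density M (indicator B)) MZ Z"
  have N: "emeasure ?N E = emeasure M (B \<inter> {\<omega>\<in>space M. Z \<omega> \<in> E})"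
    if [measurable]: "E \<in> sets MZ" for E
  proof -
    have "emeasure ?N E = (\<integral>\<^sup>+x. indicator B x * indicator (Z -` E \<inter> space M) x \<partial>M)"
      by (simp add: emeasure_distr emeasure_density)
    also have "\<dots> = (\<integral>\<^sup>+x. indicator (B \<inter> {\<omega>\<in>space M. Z \<omega> \<in> E}) x \<partial>M)"
      by (intro nn_integral_cong) (auto split: split_indicator)
    also have "\<dots> = emeasure M (B \<inter> {\<omega>\<in>space M. Z \<omega> \<in> E})"
      by (rule nn_integral_indicator) simp
    finally show ?thesis .
  qed
  have "finite_measure ?N"
    by (rule finite_measureI) (simp add: N[of "space MZ"] emeasure_eq_measure)
  moreover have ac: "absolutely_continuous ?PZ ?N"
    unfolding absolutely_continuous_def
  proof
    fix E assume "E \<in> null_sets ?PZ"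
    then have [measurable]: "E \<in> sets MZ" and "emeasure ?PZ E = 0" by auto
    have "emeasure M (B \<inter> {\<omega>\<in>space M. Z \<omega> \<in> E}) \<le> emeasure M (Z -` E \<inter> space M)"
      by (intro emeasure_mono) auto
    also have "\<dots> = 0" using \<open>emeasure ?PZ E = 0\<close> by (simp add: emeasure_distr)
    finally show "E \<in> null_sets ?N" by (intro null_setsI) (simp_all add: N)
  qed
  moreover have sets_N: "sets ?N = sets ?PZ" by simp
  ultimately obtain D where D [measurable]: "D \<in> borel_measurable ?PZ"
    and D_eq: "AE z in ?PZ. RN_deriv ?PZ ?N z = ennreal (D z)" and D_nonneg: "\<And>z. 0 \<le> D z"
    using PZ.real_RN_deriv by blast
  have "emeasure M (B \<inter> {\<omega>\<in>space M. Z \<omega> \<in> E}) = (\<integral>\<^sup>+z. ennreal (D z) * indicator E z \<partial>?PZ)"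
    if [measurable]: "E \<in> sets MZ" for E
  proof -
    have "emeasure M (B \<inter> {\<omega>\<in>space M. Z \<omega> \<in> E}) = emeasure (density ?PZ (RN_deriv ?PZ ?N)) E"
      by (simp add: PZ.density_RN_deriv[OF ac sets_N] N)
    also have "\<dots> = (\<integral>\<^sup>+z. ennreal (D z) * indicator E z \<partial>?PZ)"
      using D_eq by (auto simp: emeasure_density intro!: nn_integral_cong_AE)
    finally show ?thesis .
  qed
  with D D_nonneg show ?thesis
    by (intro that[of D]) (simp add: is_cond_prob_def)
qed

lemma is_cond_prob_AE_eq:
  assumes "is_cond_prob M MZ Z B h1" "is_cond_prob M MZ Z B h2"
  shows "AE z in distr M MZ Z. h1 z = h2 z"
proof -
  have "AE z in distr M MZ Z. ennreal (h1 z) = ennreal (h2 z)"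
    using assms by (intro PZ.density_unique_finite_measure) (auto simp: is_cond_prob_def)
  moreover have "0 \<le> h1 z" "0 \<le> h2 z" for z
    using assms by (simp_all add: is_cond_prob_def)
  ultimately show ?thesis by simp
qed

lemma is_cond_prob_cong_AE:
  assumes "is_cond_prob M MZ Z B h" "h' \<in> borel_measurable MZ" "\<And>z. 0 \<le> h' z"
    and "AE z in distr M MZ Z. h z = h' z"
  shows "is_cond_prob M MZ Z B h'"
proof -
  have "(\<integral>\<^sup>+z. ennreal (h z) * indicator E z \<partial>distr M MZ Z)
          = (\<integral>\<^sup>+z. ennreal (h' z) * indicator E z \<partial>distr M MZ Z)" for E
    using assms(4) by (intro nn_integral_cong_AE) auto
  then show ?thesis
    using assms(1-3) by (simp add: is_cond_prob_def)
qed

lemma is_cond_prob_Un: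
  assumes [measurable]: "B1 \<in> sets M" "B2 \<in> sets M" and "B1 \<inter> B2 = {}"
    and h1: "is_cond_prob M MZ Z B1 h1" and h2: "is_cond_prob M MZ Z B2 h2"
  shows "is_cond_prob M MZ Z (B1 \<union> B2) (\<lambda>z. h1 z + h2 z)"
proof -
  have [measurable]: "h1 \<in> borel_measurable MZ" "h2 \<in> borel_measurable MZ"
    and nonneg: "0 \<le> h1 z" "0 \<le> h2 z" for z
    using h1 h2 by (simp_all add: is_cond_prob_def)
  have "emeasure M ((B1 \<union> B2) \<inter> {\<omega>\<in>space M. Z \<omega> \<in> E})
          = (\<integral>\<^sup>+z. ennreal (h1 z + h2 z) * indicator E z \<partial>distr M MZ Z)"
    if [measurable]: "E \<in> sets MZ" for E
  proof -
    have "emeasure M ((B1 \<union> B2) \<inter> {\<omega>\<in>space M. Z \<omega> \<in> E})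
            = emeasure M (B1 \<inter> {\<omega>\<in>space M. Z \<omega> \<in> E}) + emeasure M (B2 \<inter> {\<omega>\<in>space M. Z \<omega> \<in> E})"
      using \<open>B1 \<inter> B2 = {}\<close> by (subst plus_emeasure) (auto intro!: arg_cong[where f="emeasure M"])
    also have "\<dots> = (\<integral>\<^sup>+z. ennreal (h1 z) * indicator E z + ennreal (h2 z) * indicator E z
                          \<partial>distr M MZ Z)"
      using h1 h2 by (simp add: is_cond_prob_def nn_integral_add)
    also have "\<dots> = (\<integral>\<^sup>+z. ennreal (h1 z + h2 z) * indicator E z \<partial>distr M MZ Z)"
      by (intro nn_integral_cong) (simp add: nonneg distrib_right)
    finally show ?thesis .
  qed
  then show ?thesis
    using nonneg by (simp add: is_cond_prob_def add_nonneg_nonneg)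
qed

lemma is_cond_prob_space: "is_cond_prob M MZ Z (space M) (\<lambda>_. 1)"
  by (simp add: is_cond_prob_def emeasure_distr vimage_def Int_def conj_commute)

lemma is_cond_prob_AE_mono:
  assumes [measurable]: "B1 \<in> sets M" "B2 \<in> sets M" and "B1 \<subseteq> B2"
    and h1: "is_cond_prob M MZ Z B1 h1" and h2: "is_cond_prob M MZ Z B2 h2"
  shows "AE z in distr M MZ Z. h1 z \<le> h2 z"
proof -
  obtain h where h: "is_cond_prob M MZ Z (B2 - B1) h"
    using is_cond_prob_exists[of "B2 - B1"] by auto
  have "B1 \<union> (B2 - B1) = B2" using \<open>B1 \<subseteq> B2\<close> by auto
  then have "is_cond_prob M MZ Z B2 (\<lambda>z. h1 z + h z)"
    using is_cond_prob_Un[OF _ _ _ h1 h] by auto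
  then have "AE z in distr M MZ Z. h1 z + h z = h2 z"
    using h2 by (rule is_cond_prob_AE_eq)
  then show ?thesis
  proof eventually_elim
    case (elim z)
    moreover have "0 \<le> h z" using h by (simp add: is_cond_prob_def)
    ultimately show ?case by linarith
  qed
qed

lemma is_cond_prob_AE_le_1:
  assumes "B \<in> sets M" "is_cond_prob M MZ Z B h"
  shows "AE z in distr M MZ Z. h z \<le> 1"
  using is_cond_prob_AE_mono[OF assms(1) sets.top _ assms(2) is_cond_prob_space]
    sets.sets_into_space[OF assms(1)] by simp

lemma is_cond_prob_min_1:
  assumes "B \<in> sets M" "is_cond_prob M MZ Z B h"
  shows "is_cond_prob M MZ Z B (\<lambda>z. min 1 (h z))"
  using is_cond_prob_AE_le_1[OF assms] assms(2)
  by (intro is_cond_prob_cong_AE[OF assms(2)]) (auto simp: is_cond_prob_def)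

lemma is_cond_prob_not:
  assumes [measurable]: "Measurable.pred M P"
    and h: "is_cond_prob M MZ Z {\<omega>\<in>space M. P \<omega>} h" and h_le_1: "\<And>z. h z \<le> 1"
  shows "is_cond_prob M MZ Z {\<omega>\<in>space M. \<not> P \<omega>} (\<lambda>z. 1 - h z)"
proof -
  have sets: "{\<omega>\<in>space M. P \<omega>} \<in> sets M" "{\<omega>\<in>space M. \<not> P \<omega>} \<in> sets M"
    by measurable
  obtain h' where h': "is_cond_prob M MZ Z {\<omega>\<in>space M. \<not> P \<omega>} h'"
    using is_cond_prob_exists[OF sets(2)] by blast
  have "{\<omega>\<in>space M. P \<omega>} \<union> {\<omega>\<in>space M. \<not> P \<omega>} = space M" by auto
  then have "is_cond_prob M MZ Z (space M) (\<lambda>z. h z + h' z)"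
    using is_cond_prob_Un[OF sets _ h h'] by auto
  then have "AE z in distr M MZ Z. h z + h' z = 1"
    using is_cond_prob_space by (rule is_cond_prob_AE_eq)
  then have "AE z in distr M MZ Z. h' z = 1 - h z"
    by eventually_elim simp
  then show ?thesis
    using h h_le_1 by (intro is_cond_prob_cong_AE[OF h']) (auto simp: is_cond_prob_def)
qed

lemma is_cond_prob_integral:
  assumes B: "B \<in> sets M" and h: "is_cond_prob M MZ Z B h"
  shows "integrable (distr M MZ Z) h" and "(\<integral>z. h z \<partial>distr M MZ Z) = measure M B"
proof -
  have [measurable]: "h \<in> borel_measurable MZ" and h_nonneg: "\<And>z. 0 \<le> h z"
    using h by (simp_all add: is_cond_prob_def)
  have "B \<inter> {\<omega>\<in>space M. Z \<omega> \<in> space MZ} = B"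
    using sets.sets_into_space[OF B] measurable_space[OF Z] by auto
  moreover have "(\<integral>\<^sup>+z. ennreal (h z) \<partial>distr M MZ Z)
                  = (\<integral>\<^sup>+z. ennreal (h z) * indicator (space MZ) z \<partial>distr M MZ Z)"
    by (intro nn_integral_cong) simp
  moreover have "emeasure M (B \<inter> {\<omega>\<in>space M. Z \<omega> \<in> space MZ})
                  = (\<integral>\<^sup>+z. ennreal (h z) * indicator (space MZ) z \<partial>distr M MZ Z)"
    using h unfolding is_cond_prob_def by blast
  ultimately have nn: "(\<integral>\<^sup>+z. ennreal (h z) \<partial>distr M MZ Z) = ennreal (measure M B)"
    by (simp add: emeasure_eq_measure)
  show int: "integrable (distr M MZ Z) h"
    using nn h_nonneg by (intro integrableI_nonneg) auto
  show "(\<integral>z. h z \<partial>distr M MZ Z) = measure M B"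
    using nn_integral_eq_integral[OF int] nn h_nonneg by (simp add: integral_nonneg)
qed

lemma is_cond_prob_degenerate:
  assumes B: "B \<in> sets M" and h: "is_cond_prob M MZ Z B h" and h_le_1: "\<And>z. h z \<le> 1"
    and "measure M B = 0 \<or> measure M B = 1"
  shows "AE z in distr M MZ Z. h z = measure M B"
proof -
  have int: "integrable (distr M MZ Z) h" and E_h: "(\<integral>z. h z \<partial>distr M MZ Z) = measure M B"
    using is_cond_prob_integral[OF B h] by simp_all
  have h_nonneg: "0 \<le> h z" for z
    using h by (simp add: is_cond_prob_def)
  show ?thesis
  proof (cases "measure M B = 0")
    case True
    then show ?thesis
      using integral_nonneg_eq_0_iff_AE[OF int] E_h h_nonneg by simp
  next
    case False
    then have "(\<integral>z. 1 - h z \<partial>distr M MZ Z) = 0"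
      using assms(4) E_h int PZ.prob_space by simp
    then have "AE z in distr M MZ Z. 1 - h z = 0"
      using integral_nonneg_eq_0_iff_AE[of "distr M MZ Z" "\<lambda>z. 1 - h z"] int h_le_1 by simp
    then show ?thesis
      using assms(4) False by auto
  qed
qed

section \<open>Mutual information with a binary variable\<close>

lemma distributed_pair_cond_prob:
  assumes U [measurable]: "U \<in> measurable M (count_space UNIV)"
    and h: "is_cond_prob M MZ Z {\<omega>\<in>space M. U \<omega>} h" and h_le_1: "\<And>z. h z \<le> 1"
  shows "distributed M (count_space UNIV \<Otimes>\<^sub>M distr M MZ Z) (\<lambda>\<omega>. (U \<omega>, Z \<omega>))
           (\<lambda>x. ennreal (if fst x then h (snd x) else 1 - h (snd x)))"
  unfolding distributed_def
proof (intro conjI)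
  let ?PZ = "distr M MZ Z" and ?F = "\<lambda>x. ennreal (if fst x then h (snd x) else 1 - h (snd x))"
  have [measurable]: "h \<in> borel_measurable MZ"
    using h by (simp add: is_cond_prob_def)
  have h_not: "is_cond_prob M MZ Z {\<omega>\<in>space M. \<not> U \<omega>} (\<lambda>z. 1 - h z)"
    using is_cond_prob_not[OF U h h_le_1] .
  show "?F \<in> borel_measurable (count_space UNIV \<Otimes>\<^sub>M ?PZ)" by measurable
  show "(\<lambda>\<omega>. (U \<omega>, Z \<omega>)) \<in> measurable M (count_space UNIV \<Otimes>\<^sub>M ?PZ)" by measurable
  show "distr M (count_space UNIV \<Otimes>\<^sub>M ?PZ) (\<lambda>\<omega>. (U \<omega>, Z \<omega>)) = density (count_space UNIV \<Otimes>\<^sub>M ?PZ) ?F"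
  proof (rule measure_eqI)
    fix E assume "E \<in> sets (distr M (count_space UNIV \<Otimes>\<^sub>M ?PZ) (\<lambda>\<omega>. (U \<omega>, Z \<omega>)))"
    then have E [measurable]: "E \<in> sets (count_space UNIV \<Otimes>\<^sub>M ?PZ)" by simp
    have [measurable]: "Pair True -` E \<in> sets MZ" "Pair False -` E \<in> sets MZ"
      using sets_Pair1[OF E] by simp_all
    have "(\<lambda>\<omega>. (U \<omega>, Z \<omega>)) -` E \<inter> space M
            = {\<omega>\<in>space M. U \<omega>} \<inter> {\<omega>\<in>space M. Z \<omega> \<in> Pair True -` E}
              \<union> {\<omega>\<in>space M. \<not> U \<omega>} \<inter> {\<omega>\<in>space M. Z \<omega> \<in> Pair False -` E}"
      by (rule set_eqI, rename_tac \<omega>, case_tac "U \<omega>") auto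
    then have "emeasure (distr M (count_space UNIV \<Otimes>\<^sub>M ?PZ) (\<lambda>\<omega>. (U \<omega>, Z \<omega>))) E
        = emeasure M ({\<omega>\<in>space M. U \<omega>} \<inter> {\<omega>\<in>space M. Z \<omega> \<in> Pair True -` E})
          + emeasure M ({\<omega>\<in>space M. \<not> U \<omega>} \<inter> {\<omega>\<in>space M. Z \<omega> \<in> Pair False -` E})"
      by (simp add: emeasure_distr) (subst plus_emeasure; auto)
    also have "\<dots> = (\<integral>\<^sup>+z. ennreal (h z) * indicator (Pair True -` E) z \<partial>?PZ)
        + (\<integral>\<^sup>+z. ennreal (1 - h z) * indicator (Pair False -` E) z \<partial>?PZ)"
      using h h_not \<open>Pair True -` E \<in> sets MZ\<close> \<open>Pair False -` E \<in> sets MZ\<close>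
      unfolding is_cond_prob_def by (intro arg_cong2[where f="(+)"]) blast+
    also have "\<dots> = (\<integral>\<^sup>+u. \<integral>\<^sup>+z. ?F (u, z) * indicator E (u, z) \<partial>?PZ \<partial>count_space UNIV)"
      by (simp add: nn_integral_count_space_finite UNIV_bool add.commute indicator_def)
    also have "\<dots> = (\<integral>\<^sup>+x. ?F x * indicator E x \<partial>(count_space UNIV \<Otimes>\<^sub>M ?PZ))"
      by (rule PZ.nn_integral_fst) measurable
    also have "\<dots> = emeasure (density (count_space UNIV \<Otimes>\<^sub>M ?PZ) ?F) E"
      by (rule emeasure_density[symmetric]) measurable
    finally show "emeasure (distr M (count_space UNIV \<Otimes>\<^sub>M ?PZ) (\<lambda>\<omega>. (U \<omega>, Z \<omega>))) E
        = emeasure (density (count_space UNIV \<Otimes>\<^sub>M ?PZ) ?F) E" .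
  qed simp
qed

lemma mutual_information_bool_eq_integral:
  assumes U [measurable]: "U \<in> measurable M (count_space UNIV)"
    and h: "is_cond_prob M MZ Z {\<omega>\<in>space M. U \<omega>} h" and h_le_1: "\<And>z. h z \<le> 1"
  defines "p \<equiv> prob {\<omega>\<in>space M. U \<omega>}"
  shows "mutual_information 2 (count_space UNIV) MZ U Z
           = (\<integral>z. binary_divergence (h z) p \<partial>distr M MZ Z)"
    and "integrable (distr M MZ Z) (\<lambda>z. binary_divergence (h z) p)"
proof -
  interpret information_space M 2 by standard simp
  let ?PZ = "distr M MZ Z" and ?S = "count_space (UNIV :: bool set)"
  interpret S: finite_measure ?S by (rule finite_measure_count_space) simp
  interpret SP: pair_sigma_finite ?S ?PZ ..
  interpret SPf: finite_measure "?S \<Otimes>\<^sub>M ?PZ"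
    by (rule finite_measure_pair_measure) unfold_locales
  have [measurable]: "h \<in> borel_measurable MZ" and h_nonneg: "\<And>z. 0 \<le> h z"
    using h by (simp_all add: is_cond_prob_def)
  let ?Pu = "\<lambda>u. prob {\<omega>\<in>space M. U \<omega> = u}"
  let ?Puz = "\<lambda>x. if fst x then h (snd x) else 1 - h (snd x)"
  let ?G = "\<lambda>x. ?Puz x * log 2 (?Puz x / (?Pu (fst x) * 1))"
  have Pu: "prob {\<omega>\<in>space M. U \<omega>} = p" "prob {\<omega>\<in>space M. \<not> U \<omega>} = 1 - p"
    using prob_neg[of U] by (simp_all add: p_def)
  have p: "0 \<le> p" "p \<le> 1" by (simp_all add: p_def)
  have int: "integrable ?PZ (\<lambda>z. h z * log 2 (h z / p))"
    "integrable ?PZ (\<lambda>z. (1 - h z) * log 2 ((1 - h z) / (1 - p)))"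
    using abs_mult_log_div_le[of "h _" p] abs_mult_log_div_le[of "1 - h _" "1 - p"]
      h_nonneg h_le_1 p
    by (auto intro!: PZ.integrable_const_bound AE_I2)
  have "mutual_information 2 ?S MZ U Z = mutual_information 2 ?S ?PZ U Z"
    unfolding mutual_information_def
    by (intro arg_cong2[where f="KL_divergence 2"] arg_cong2[where f=pair_measure] distr_cong
        sets_pair_measure_cong) simp_all
  also have "\<dots> = (\<integral>x. ?G x \<partial>(?S \<Otimes>\<^sub>M ?PZ))"
  proof (rule mutual_information_distr[OF _ _ distributed_bool[OF M]])
    show "distributed M ?PZ Z (\<lambda>_. ennreal 1)"
      unfolding distributed_def by (auto simp: density_1 intro!: distr_cong)
    show "distributed M (?S \<Otimes>\<^sub>M ?PZ) (\<lambda>\<omega>. (U \<omega>, Z \<omega>)) (\<lambda>x. ennreal (?Puz x))"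
      by (rule distributed_pair_cond_prob[OF U h h_le_1])
  qed (use h_nonneg h_le_1 in \<open>auto intro: sigma_finite_measure_count_space_finite
        PZ.sigma_finite_measure_axioms\<close>)
  also have "\<dots> = (\<integral>u. \<integral>z. ?G (u, z) \<partial>?PZ \<partial>?S)"
  proof (rule SP.integral_fst'[symmetric], rule SPf.integrable_const_bound)
    show "AE x in ?S \<Otimes>\<^sub>M ?PZ. norm (?G x) \<le> 1 + \<bar>log 2 p\<bar> + \<bar>log 2 (1 - p)\<bar>"
    proof (rule AE_I2)
      fix x :: "bool \<times> 'z"
      show "norm (?G x) \<le> 1 + \<bar>log 2 p\<bar> + \<bar>log 2 (1 - p)\<bar>"
        using abs_mult_log_div_le[of "h (snd x)" p] abs_mult_log_div_le[of "1 - h (snd x)" "1 - p"]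
          h_nonneg[of "snd x"] h_le_1[of "snd x"] p
        by (cases "fst x") (simp_all add: Pu add_increasing2 add_increasing)
    qed
  qed measurable
  also have "\<dots> = (\<integral>z. h z * log 2 (h z / p) \<partial>?PZ)
                   + (\<integral>z. (1 - h z) * log 2 ((1 - h z) / (1 - p)) \<partial>?PZ)"
    by (simp add: lebesgue_integral_count_space_finite UNIV_bool Pu)
  also have "\<dots> = (\<integral>z. binary_divergence (h z) p \<partial>?PZ)"
    using int by (simp add: binary_divergence_def)
  finally show "mutual_information 2 (count_space UNIV) MZ U Z
           = (\<integral>z. binary_divergence (h z) p \<partial>distr M MZ Z)" .
  show "integrable (distr M MZ Z) (\<lambda>z. binary_divergence (h z) p)"
    using int by (simp add: binary_divergence_def)
qed

lemma mutual_information_bool: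
  assumes U [measurable]: "U \<in> measurable M (count_space UNIV)"
    and h: "is_cond_prob M MZ Z {\<omega>\<in>space M. U \<omega>} h" and h_le_1: "\<And>z. h z \<le> 1"
  defines "p \<equiv> prob {\<omega>\<in>space M. U \<omega>}"
  shows "mutual_information 2 (count_space UNIV) MZ U Z
           = binary_entropy p - (\<integral>z. binary_entropy (h z) \<partial>distr M MZ Z)"
proof -
  let ?PZ = "distr M MZ Z"
  note MI = mutual_information_bool_eq_integral[OF U h h_le_1, folded p_def]
  have pred_U: "{\<omega>\<in>space M. U \<omega>} \<in> sets M" by measurable
  have [measurable]: "h \<in> borel_measurable MZ" and h_nonneg: "\<And>z. 0 \<le> h z"
    using h by (simp_all add: is_cond_prob_def)
  have int_h: "integrable ?PZ h" and E_h: "(\<integral>z. h z \<partial>?PZ) = p"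
    using is_cond_prob_integral[OF _ h] unfolding p_def by (simp_all add: pred_U)
  have int_H: "integrable ?PZ (\<lambda>z. binary_entropy (h z))"
    using binary_entropy_nonneg binary_entropy_le_1 h_nonneg h_le_1
    by (intro PZ.integrable_const_bound[where B=1] AE_I2) (auto simp: binary_entropy_def)
  show ?thesis
  proof (cases "0 < p \<and> p < 1")
    case True
    let ?L = "log 2 (1 - p) - log 2 p"
    have "(\<integral>z. binary_divergence (h z) p \<partial>?PZ)
            = (\<integral>z. - binary_entropy (h z) + (h z * ?L - log 2 (1 - p)) \<partial>?PZ)"
      using True h_nonneg h_le_1
      by (intro Bochner_Integration.integral_cong) (simp_all add: binary_divergence_eq)
    also have "\<dots> = - (\<integral>z. binary_entropy (h z) \<partial>?PZ) + (p * ?L - log 2 (1 - p))"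
      using int_h int_H E_h PZ.prob_space by simp
    also have "p * ?L - log 2 (1 - p) = binary_entropy p"
      by (simp add: binary_entropy_def algebra_simps)
    finally show ?thesis using MI(1) by simp
  next
    case False
    moreover have "0 \<le> p" "p \<le> 1" by (simp_all add: p_def)
    ultimately have p: "p = 0 \<or> p = 1" by auto
    have "AE z in ?PZ. h z = p"
      using is_cond_prob_degenerate[OF pred_U h h_le_1] p by (simp add: p_def)
    then have "AE z in ?PZ. binary_divergence (h z) p = 0 \<and> binary_entropy (h z) = 0"
      by eventually_elim (use p in \<open>auto simp: binary_divergence_def\<close>)
    then have "(\<integral>z. binary_divergence (h z) p \<partial>?PZ) = 0" "(\<integral>z. binary_entropy (h z) \<partial>?PZ) = 0"
      by (auto intro!: integral_eq_zero_AE elim: AE_mp)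
    then show ?thesis using MI(1) p by auto
  qed
qed

lemma cond_prob_AE_eq_prob_of_mutual_information_eq_0:
  assumes U [measurable]: "U \<in> measurable M (count_space UNIV)"
    and h: "is_cond_prob M MZ Z {\<omega>\<in>space M. U \<omega>} h" and h_le_1: "\<And>z. h z \<le> 1"
    and MI: "mutual_information 2 (count_space UNIV) MZ U Z = 0"
    and p: "0 < prob {\<omega>\<in>space M. U \<omega>}" "prob {\<omega>\<in>space M. U \<omega>} < 1"
  shows "AE z in distr M MZ Z. h z = prob {\<omega>\<in>space M. U \<omega>}"
proof -
  let ?p = "prob {\<omega>\<in>space M. U \<omega>}"
  have h_nonneg: "0 \<le> h z" for z
    using h by (simp add: is_cond_prob_def)
  note D = mutual_information_bool_eq_integral[OF U h h_le_1]
  have "AE z in distr M MZ Z. binary_divergence (h z) ?p = 0"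
    using integral_nonneg_eq_0_iff_AE[OF D(2)] D(1) MI h_nonneg h_le_1 p
    by (simp add: binary_divergence_nonneg)
  then show ?thesis
  proof eventually_elim
    case (elim z)
    then show ?case
      using binary_divergence_nonneg(2)[of "h z" ?p] h_nonneg[of z] h_le_1[of z] p by force
  qed
qed

lemma cond_prob_AE_split_of_mutual_information_eq_0:
  fixes A Y :: "'m \<Rightarrow> bool"
  assumes A [measurable]: "A \<in> measurable M (count_space UNIV)"
    and Y [measurable]: "Y \<in> measurable M (count_space UNIV)"
    and MI_A: "mutual_information 2 (count_space UNIV) MZ A Z = 0"
    and pA: "0 < prob {\<omega>\<in>space M. A \<omega>}" "prob {\<omega>\<in>space M. A \<omega>} < 1"
    and hY: "is_cond_prob M MZ Z {\<omega>\<in>space M. Y \<omega>} hY"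
    and d0: "is_cond_prob M MZ Z {\<omega>\<in>space M. Y \<omega> \<and> \<not> A \<omega>} d0"
    and d1: "is_cond_prob M MZ Z {\<omega>\<in>space M. Y \<omega> \<and> A \<omega>} d1"
  shows "AE z in distr M MZ Z. d0 z \<le> 1 - prob {\<omega>\<in>space M. A \<omega>}
           \<and> d1 z \<le> prob {\<omega>\<in>space M. A \<omega>} \<and> hY z = d0 z + d1 z"
proof -
  have sets: "{\<omega>\<in>space M. A \<omega>} \<in> sets M" "{\<omega>\<in>space M. Y \<omega> \<and> \<not> A \<omega>} \<in> sets M"
    "{\<omega>\<in>space M. Y \<omega> \<and> A \<omega>} \<in> sets M"
    by (measurable, measurable, measurable)
  obtain hA0 where hA0: "is_cond_prob M MZ Z {\<omega>\<in>space M. A \<omega>} hA0"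
    using is_cond_prob_exists[OF sets(1)] by blast
  let ?hA = "\<lambda>z. min 1 (hA0 z)"
  have hA: "is_cond_prob M MZ Z {\<omega>\<in>space M. A \<omega>} ?hA"
    by (rule is_cond_prob_min_1[OF sets(1) hA0])
  have "AE z in distr M MZ Z. ?hA z = prob {\<omega>\<in>space M. A \<omega>}"
    by (rule cond_prob_AE_eq_prob_of_mutual_information_eq_0[OF A hA _ MI_A pA]) simp
  moreover have "AE z in distr M MZ Z. d1 z \<le> ?hA z"
    by (rule is_cond_prob_AE_mono[OF sets(3,1) _ d1 hA]) auto
  moreover have "AE z in distr M MZ Z. d0 z + ?hA z \<le> 1"
    by (rule is_cond_prob_AE_le_1[OF sets.Un[OF sets(2,1)] is_cond_prob_Un[OF sets(2,1) _ d0 hA]])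
      auto
  moreover have "AE z in distr M MZ Z. d0 z + d1 z = hY z"
  proof (rule is_cond_prob_AE_eq[OF _ hY])
    have "{\<omega>\<in>space M. Y \<omega> \<and> \<not> A \<omega>} \<union> {\<omega>\<in>space M. Y \<omega> \<and> A \<omega>} = {\<omega>\<in>space M. Y \<omega>}"
      by auto
    then show "is_cond_prob M MZ Z {\<omega>\<in>space M. Y \<omega>} (\<lambda>z. d0 z + d1 z)"
      using is_cond_prob_Un[OF sets(2,3) _ d0 d1] by auto
  qed
  ultimately show ?thesis
    by eventually_elim auto
qed

lemma Delta_le_integral_cond_prob:
  fixes A Y :: "'m \<Rightarrow> bool"
  assumes A [measurable]: "A \<in> measurable M (count_space UNIV)"
    and Y [measurable]: "Y \<in> measurable M (count_space UNIV)"
    and d0: "is_cond_prob M MZ Z {\<omega>\<in>space M. Y \<omega> \<and> \<not> A \<omega>} d0"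
    and d1: "is_cond_prob M MZ Z {\<omega>\<in>space M. Y \<omega> \<and> A \<omega>} d1"
  defines "pA \<equiv> prob {\<omega>\<in>space M. A \<omega>}"
  shows "Delta M A Y \<le> (\<integral>z. \<bar>d0 z / (1 - pA) - d1 z / pA\<bar> \<partial>distr M MZ Z)"
proof -
  have sets: "{\<omega>\<in>space M. A \<omega>} \<in> sets M" "{\<omega>\<in>space M. Y \<omega> \<and> \<not> A \<omega>} \<in> sets M"
    "{\<omega>\<in>space M. Y \<omega> \<and> A \<omega>} \<in> sets M"
    by (measurable, measurable, measurable)
  note int = is_cond_prob_integral[OF sets(2) d0] is_cond_prob_integral[OF sets(3) d1]
  have "prob {\<omega>\<in>space M. \<not> A \<omega>} = 1 - pA"
    unfolding pA_def by (rule prob_neg[OF sets(1)])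
  then have "Delta M A Y
      = \<bar>(\<integral>z. d0 z \<partial>distr M MZ Z) / (1 - pA) - (\<integral>z. d1 z \<partial>distr M MZ Z) / pA\<bar>"
    using int by (simp add: Delta_def pA_def)
  also have "\<dots> = \<bar>\<integral>z. d0 z / (1 - pA) - d1 z / pA \<partial>distr M MZ Z\<bar>"
    using int by simp
  also have "\<dots> \<le> (\<integral>z. \<bar>d0 z / (1 - pA) - d1 z / pA\<bar> \<partial>distr M MZ Z)"
    by (rule integral_abs_bound)
  finally show ?thesis .
qed

lemma integral_binary_entropy_cond_prob_ge:
  fixes A Y :: "'m \<Rightarrow> bool"
  assumes A [measurable]: "A \<in> measurable M (count_space UNIV)"
    and Y [measurable]: "Y \<in> measurable M (count_space UNIV)"
    and MI_A: "mutual_information 2 (count_space UNIV) MZ A Z = 0"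
    and hY: "is_cond_prob M MZ Z {\<omega>\<in>space M. Y \<omega>} hY" and hY_le_1: "\<And>z. hY z \<le> 1"
  shows "Delta M A Y * binary_entropy (prob {\<omega>\<in>space M. A \<omega>})
           \<le> (\<integral>z. binary_entropy (hY z) \<partial>distr M MZ Z)"
proof -
  let ?PZ = "distr M MZ Z" and ?pA = "prob {\<omega>\<in>space M. A \<omega>}"
  have pA: "0 \<le> ?pA" "?pA \<le> 1" by simp_all
  have hY_nonneg: "\<And>z. 0 \<le> hY z" and [measurable]: "hY \<in> borel_measurable MZ"
    using hY by (simp_all add: is_cond_prob_def)
  show ?thesis
  proof (cases "0 < ?pA \<and> ?pA < 1")
    case True
    have sets: "{\<omega>\<in>space M. Y \<omega> \<and> \<not> A \<omega>} \<in> sets M" "{\<omega>\<in>space M. Y \<omega> \<and> A \<omega>} \<in> sets M"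
      by (measurable, measurable)
    obtain d0 where d0: "is_cond_prob M MZ Z {\<omega>\<in>space M. Y \<omega> \<and> \<not> A \<omega>} d0"
      using is_cond_prob_exists[OF sets(1)] by blast
    obtain d1 where d1: "is_cond_prob M MZ Z {\<omega>\<in>space M. Y \<omega> \<and> A \<omega>} d1"
      using is_cond_prob_exists[OF sets(2)] by blast
    have d_nonneg: "0 \<le> d0 z" "0 \<le> d1 z" for z
      using d0 d1 by (simp_all add: is_cond_prob_def)
    \<comment> \<open>u and v are the conditional probabilities of Y given Z within the groups \<not>A and A\<close>
    define u where "u z = d0 z / (1 - ?pA)" for z
    define v where "v z = d1 z / ?pA" for z
    have "AE z in ?PZ. \<bar>u z - v z\<bar> * binary_entropy ?pA \<le> binary_entropy (hY z)"
      using cond_prob_AE_split_of_mutual_information_eq_0[OF A Y MI_A conjunct1[OF True]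
          conjunct2[OF True] hY d0 d1]
    proof eventually_elim
      case (elim z)
      have "0 \<le> u z" "u z \<le> 1" "0 \<le> v z" "v z \<le> 1"
        using elim True d_nonneg[of z] by (auto simp: u_def v_def divide_le_eq_1)
      moreover have "hY z = (1 - ?pA) * u z + (1 - (1 - ?pA)) * v z"
        using elim True by (simp add: u_def v_def)
      ultimately show ?case
        using binary_entropy_mixture_ge[of "u z" "v z" "1 - ?pA"] pA
        by (simp add: binary_entropy_one_minus)
    qed
    moreover have "integrable ?PZ u" "integrable ?PZ v"
      using is_cond_prob_integral(1)[OF sets(1) d0] is_cond_prob_integral(1)[OF sets(2) d1]
      by (simp_all add: u_def[abs_def] v_def[abs_def])
    moreover have "integrable ?PZ (\<lambda>z. binary_entropy (hY z))"
      using binary_entropy_nonneg binary_entropy_le_1 hY_nonneg hY_le_1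
      by (intro PZ.integrable_const_bound[where B=1] AE_I2) (auto simp: binary_entropy_def)
    ultimately have "(\<integral>z. \<bar>u z - v z\<bar> \<partial>?PZ) * binary_entropy ?pA \<le> (\<integral>z. binary_entropy (hY z) \<partial>?PZ)"
      by (subst integral_mult_left_zero[symmetric]) (intro integral_mono_AE; simp)
    moreover have "Delta M A Y \<le> (\<integral>z. \<bar>u z - v z\<bar> \<partial>?PZ)"
      using Delta_le_integral_cond_prob[OF A Y d0 d1] by (simp add: u_def v_def)
    ultimately show ?thesis
      using binary_entropy_nonneg[OF pA] by (meson mult_right_mono order_trans)
  next
    case False
    then have "binary_entropy ?pA = 0" using pA by (cases "?pA = 0") auto
    then show ?thesis
      using hY_nonneg hY_le_1 by (simp add: binary_entropy_nonneg integral_nonneg)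
  qed
qed

lemma mutual_information_le_of_mutual_information_eq_0:
  fixes A Y :: "'m \<Rightarrow> bool"
  assumes A [measurable]: "A \<in> measurable M (count_space UNIV)"
    and Y [measurable]: "Y \<in> measurable M (count_space UNIV)"
    and MI_A: "mutual_information 2 (count_space UNIV) MZ A Z = 0"
  shows "mutual_information 2 (count_space UNIV) MZ Y Z \<le> H2 M Y - Delta M A Y * H2 M A"
proof -
  have Y_sets: "{\<omega>\<in>space M. Y \<omega>} \<in> sets M" by measurable
  obtain hY where hY: "is_cond_prob M MZ Z {\<omega>\<in>space M. Y \<omega>} hY"
    using is_cond_prob_exists[OF Y_sets] by blast
  note hY' = is_cond_prob_min_1[OF Y_sets hY]
  have "mutual_information 2 (count_space UNIV) MZ Y Z
          = binary_entropy (prob {\<omega>\<in>space M. Y \<omega>})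
            - (\<integral>z. binary_entropy (min 1 (hY z)) \<partial>distr M MZ Z)"
    by (rule mutual_information_bool[OF Y hY']) simp
  also have "\<dots> \<le> binary_entropy (prob {\<omega>\<in>space M. Y \<omega>})
                   - Delta M A Y * binary_entropy (prob {\<omega>\<in>space M. A \<omega>})"
    using integral_binary_entropy_cond_prob_ge[OF A Y MI_A hY'] by simp
  finally show ?thesis
    by (simp add: H2_eq_binary_entropy[OF M A] H2_eq_binary_entropy[OF M Y])
qed

end

lemma measure_Collect_distr_eq:
  assumes X: "X \<in> measurable M PX" and PX: "distr M PX X = PX"
    and P: "{x\<in>space PX. P x} \<in> sets PX"
  shows "measure PX {x\<in>space PX. P x} = measure M {\<omega>\<in>space M. P (X \<omega>)}"
proof -
  have "measure PX {x\<in>space PX. P x} = measure M (X -` {x\<in>space PX. P x} \<inter> space M)"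
    by (subst (1) PX[symmetric]) (rule measure_distr[OF X P])
  also have "X -` {x\<in>space PX. P x} \<inter> space M = {\<omega>\<in>space M. P (X \<omega>)}"
    using measurable_space[OF X] by auto
  finally show ?thesis .
qed

lemma H2_distr:
  assumes "prob_space M" and X [measurable]: "X \<in> measurable M PX" and PX: "distr M PX X = PX"
    and [measurable]: "f \<in> measurable PX (count_space UNIV)"
  shows "H2 PX f = H2 M (\<lambda>\<omega>. f (X \<omega>))"
proof -
  have "prob_space PX"
    using prob_space.prob_space_distr[OF assms(1) X] PX by simp
  moreover have "{x\<in>space PX. f x} \<in> sets PX" by measurable
  ultimately show ?thesis
    using assms(1) by (simp add: H2_eq_binary_entropy measure_Collect_distr_eq[OF X PX])
qed

lemma Delta_distr:
  assumes X [measurable]: "X \<in> measurable M PX" and PX: "distr M PX X = PX"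
    and [measurable]: "fA \<in> measurable PX (count_space UNIV)"
      "fY \<in> measurable PX (count_space UNIV)"
  shows "Delta PX fA fY = Delta M (\<lambda>\<omega>. fA (X \<omega>)) (\<lambda>\<omega>. fY (X \<omega>))"
proof -
  have [simp]: "measure PX {x\<in>space PX. P x} = measure M {\<omega>\<in>space M. P (X \<omega>)}"
    if [measurable]: "Measurable.pred PX P" for P
    by (rule measure_Collect_distr_eq[OF X PX]) measurable
  show ?thesis
    by (simp add: Delta_def)
qed

lemma nn_integral_distr_finite_range:
  fixes Z :: "'m \<Rightarrow> real"
  assumes [measurable]: "Z \<in> borel_measurable M" "f \<in> borel_measurable borel"
    and "finite R" and range: "\<And>\<omega>. \<omega> \<in> space M \<Longrightarrow> Z \<omega> \<in> R"
  shows "(\<integral>\<^sup>+z. f z \<partial>distr M borel Z) = (\<Sum>v\<in>R. f v * emeasure M {\<omega>\<in>space M. Z \<omega> = v})"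
proof -
  have "(\<integral>\<^sup>+z. f z \<partial>distr M borel Z) = (\<integral>\<^sup>+\<omega>. f (Z \<omega>) \<partial>M)"
    by (rule nn_integral_distr) simp_all
  also have "\<dots> = (\<integral>\<^sup>+\<omega>. (\<Sum>v\<in>R. f v * indicator {\<omega>\<in>space M. Z \<omega> = v} \<omega>) \<partial>M)"
  proof (rule nn_integral_cong)
    fix \<omega> assume "\<omega> \<in> space M"
    then show "f (Z \<omega>) = (\<Sum>v\<in>R. f v * indicator {\<omega>\<in>space M. Z \<omega> = v} \<omega>)"
      using range[of \<omega>] \<open>finite R\<close>
      by (subst sum.mono_neutral_cong_right[where S="{Z \<omega>}"]) (auto simp: indicator_def)
  qed
  also have "\<dots> = (\<Sum>v\<in>R. f v * emeasure M {\<omega>\<in>space M. Z \<omega> = v})"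
    by (subst nn_integral_sum) (auto simp: nn_integral_cmult_indicator)
  finally show ?thesis .
qed

lemma integral_distr_finite_range:
  fixes Z :: "'m \<Rightarrow> real" and f :: "real \<Rightarrow> real"
  assumes "finite_measure M" and [measurable]: "Z \<in> borel_measurable M" "f \<in> borel_measurable borel"
    and "finite R" and range: "\<And>\<omega>. \<omega> \<in> space M \<Longrightarrow> Z \<omega> \<in> R"
  shows "(\<integral>z. f z \<partial>distr M borel Z) = (\<Sum>v\<in>R. f v * measure M {\<omega>\<in>space M. Z \<omega> = v})"
proof -
  interpret finite_measure M by fact
  have "(\<integral>z. f z \<partial>distr M borel Z) = (\<integral>\<omega>. f (Z \<omega>) \<partial>M)"
    by (rule integral_distr) simp_all
  also have "\<dots> = (\<integral>\<omega>. (\<Sum>v\<in>R. f v * indicator {\<omega>\<in>space M. Z \<omega> = v} \<omega>) \<partial>M)"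
  proof (rule Bochner_Integration.integral_cong[OF refl])
    fix \<omega> assume "\<omega> \<in> space M"
    then show "f (Z \<omega>) = (\<Sum>v\<in>R. f v * indicator {\<omega>\<in>space M. Z \<omega> = v} \<omega>)"
      using range[of \<omega>] \<open>finite R\<close>
      by (subst sum.mono_neutral_cong_right[where S="{Z \<omega>}"]) (auto simp: indicator_def)
  qed
  also have "\<dots> = (\<Sum>v\<in>R. f v * measure M {\<omega>\<in>space M. Z \<omega> = v})"
    by (subst Bochner_Integration.integral_sum)
      (auto intro!: integrable_real_indicator simp: less_top[symmetric])
  finally show ?thesis .
qed

lemma is_cond_prob_finite_range:
  fixes Z :: "'m \<Rightarrow> real" and c :: "real \<Rightarrow> real"
  assumes M: "prob_space M" and Z [measurable]: "Z \<in> borel_measurable M"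
    and U [measurable]: "U \<in> measurable M (count_space UNIV)"
    and R: "finite R" and range: "\<And>\<omega>. \<omega> \<in> space M \<Longrightarrow> Z \<omega> \<in> R"
    and c: "\<And>v. v \<in> R \<Longrightarrow> 0 \<le> c v"
    and joint: "\<And>v. v \<in> R \<Longrightarrow>
      measure M {\<omega>\<in>space M. U \<omega> \<and> Z \<omega> = v} = c v * measure M {\<omega>\<in>space M. Z \<omega> = v}"
  shows "is_cond_prob M borel Z {\<omega>\<in>space M. U \<omega>} (\<lambda>z. if z \<in> R then c z else 0)"
proof -
  interpret prob_space M by fact
  define h where "h z = (\<Sum>v\<in>R. if z = v then c v else 0)" for z
  have [measurable]: "h \<in> borel_measurable borel"
    unfolding h_def by measurable
  have h_eq: "h = (\<lambda>z. if z \<in> R then c z else 0)"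
    unfolding h_def using R by (simp add: sum.delta' fun_eq_iff)
  have "emeasure M ({\<omega>\<in>space M. U \<omega>} \<inter> {\<omega>\<in>space M. Z \<omega> \<in> E})
          = (\<integral>\<^sup>+z. ennreal (h z) * indicator E z \<partial>distr M borel Z)"
    if [measurable]: "E \<in> sets borel" for E
  proof -
    have "{\<omega>\<in>space M. U \<omega>} \<inter> {\<omega>\<in>space M. Z \<omega> \<in> E}
            = (\<Union>v\<in>R \<inter> E. {\<omega>\<in>space M. U \<omega> \<and> Z \<omega> = v})"
      (is "?lhs = _") using range by auto
    have "emeasure M ({\<omega>\<in>space M. U \<omega>} \<inter> {\<omega>\<in>space M. Z \<omega> \<in> E})
                 = (\<Sum>v\<in>R \<inter> E. emeasure M {\<omega>\<in>space M. U \<omega> \<and> Z \<omega> = v})"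
    proof -
      have sets: "{\<omega>\<in>space M. U \<omega> \<and> Z \<omega> = v} \<in> sets M" for v by measurable
      show ?thesis
        unfolding \<open>?lhs = _\<close>
        by (rule sum_emeasure[symmetric]) (use sets R in \<open>auto simp: disjoint_family_on_def\<close>)
    qed
    also have "\<dots> = (\<Sum>v\<in>R. ennreal (h v) * indicator E v * emeasure M {\<omega>\<in>space M. Z \<omega> = v})"
      using R joint c
      by (auto simp: sum.inter_restrict h_eq emeasure_eq_measure ennreal_mult'' indicator_def
          intro!: sum.cong)
    also have "\<dots> = (\<integral>\<^sup>+z. ennreal (h z) * indicator E z \<partial>distr M borel Z)"
      by (rule nn_integral_distr_finite_range[OF Z _ R range, symmetric]) measurable
    finally show ?thesis .
  qed
  moreover have "0 \<le> h z" for z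
    using c by (simp add: h_eq)
  ultimately show ?thesis
    unfolding h_eq[symmetric] by (simp add: is_cond_prob_def)
qed

lemma mutual_information_bool_finite_range:
  fixes Z :: "'m \<Rightarrow> real" and c :: "real \<Rightarrow> real"
  assumes M: "prob_space M" and Z [measurable]: "Z \<in> borel_measurable M"
    and U [measurable]: "U \<in> measurable M (count_space UNIV)"
    and R: "finite R" and range: "\<And>\<omega>. \<omega> \<in> space M \<Longrightarrow> Z \<omega> \<in> R"
    and c: "\<And>v. v \<in> R \<Longrightarrow> 0 \<le> c v \<and> c v \<le> 1"
    and joint: "\<And>v. v \<in> R \<Longrightarrow>
      measure M {\<omega>\<in>space M. U \<omega> \<and> Z \<omega> = v} = c v * measure M {\<omega>\<in>space M. Z \<omega> = v}"
  shows "prob_space.mutual_information M 2 (count_space UNIV) borel U Z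
           = binary_entropy (measure M {\<omega>\<in>space M. U \<omega>})
             - (\<Sum>v\<in>R. measure M {\<omega>\<in>space M. Z \<omega> = v} * binary_entropy (c v))"
proof -
  interpret prob_space M by fact
  let ?h = "\<lambda>z. if z \<in> R then c z else 0"
  have h: "is_cond_prob M borel Z {\<omega>\<in>space M. U \<omega>} ?h"
    using is_cond_prob_finite_range[OF M Z U R range _ joint] c by blast
  then have [measurable]: "?h \<in> borel_measurable borel"
    by (simp add: is_cond_prob_def)
  have "(\<integral>z. binary_entropy (?h z) \<partial>distr M borel Z)
          = (\<Sum>v\<in>R. binary_entropy (?h v) * measure M {\<omega>\<in>space M. Z \<omega> = v})"
    by (rule integral_distr_finite_range[OF finite_measure_axioms Z _ R range]) measurable
  also have "\<dots> = (\<Sum>v\<in>R. measure M {\<omega>\<in>space M. Z \<omega> = v} * binary_entropy (c v))"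
    by (auto simp: mult.commute intro!: sum.cong)
  finally show ?thesis
    using mutual_information_bool[OF M Z U h] c by simp
qed

section \<open>A representation attaining the bound\<close>

definition uniform_01 :: "real measure" where
  "uniform_01 = uniform_measure lborel {0..1}"

lemma prob_space_uniform_01: "prob_space uniform_01"
  unfolding uniform_01_def by (rule prob_space_uniform_measure) auto

lemma space_uniform_01 [simp]: "space uniform_01 = UNIV"
  and sets_uniform_01 [simp]: "sets uniform_01 = sets borel"
  by (simp_all add: uniform_01_def)

lemma measure_uniform_01_threshold:
  fixes c x y v :: real
  assumes "0 \<le> c" "c \<le> 1" "x \<noteq> y"
  shows "measure uniform_01 {s. (if s \<le> c then x else y) = v}
           = (if v = x then c else 0) + (if v = y then 1 - c else 0)"
proof -
  have "measure uniform_01 {s. s \<le> c} = c" and "measure uniform_01 {s. \<not> s \<le> c} = 1 - c"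
  proof -
    have "{0..1} \<inter> {s. s \<le> c} = {0..c}" "{0..1} \<inter> {s. \<not> s \<le> c} = {c<..1}"
      using assms by auto
    then show "measure uniform_01 {s. s \<le> c} = c" "measure uniform_01 {s. \<not> s \<le> c} = 1 - c"
      using assms by (simp_all add: uniform_01_def measure_def emeasure_uniform_measure
          divide_ennreal[of _ 1, simplified])
  qed
  moreover have "{s. (if s \<le> c then x else y) = v}
                   = (if v = x then {s. s \<le> c} else if v = y then {s. \<not> s \<le> c} else {})"
    using assms by auto
  ultimately show ?thesis using assms by auto
qed

lemma indep_set_fst_snd:
  assumes PX: "prob_space PX" and MSa: "prob_space MSa"
  shows "prob_space.indep_set (PX \<Otimes>\<^sub>M MSa)
           (sigma_sets (space (PX \<Otimes>\<^sub>M MSa)) {fst -` A \<inter> space (PX \<Otimes>\<^sub>M MSa) | A. A \<in> sets PX})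
           (sigma_sets (space (PX \<Otimes>\<^sub>M MSa)) {snd -` B \<inter> space (PX \<Otimes>\<^sub>M MSa) | B. B \<in> sets MSa})"
proof -
  interpret MSa: prob_space MSa by fact
  interpret P: pair_prob_space PX MSa
    by (simp add: PX MSa pair_prob_space_def pair_sigma_finite_def prob_space_imp_sigma_finite)
  let ?F = "{fst -` A \<inter> space (PX \<Otimes>\<^sub>M MSa) | A. A \<in> sets PX}"
  let ?G = "{snd -` B \<inter> space (PX \<Otimes>\<^sub>M MSa) | B. B \<in> sets MSa}"
  have "P.indep_set ?F ?G"
    unfolding P.indep_sets2_eq
  proof (intro conjI ballI)
    show "?F \<subseteq> P.events" "?G \<subseteq> P.events"
      using measurable_sets[OF measurable_fst] measurable_sets[OF measurable_snd] by blast+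
    fix a b assume "a \<in> ?F" "b \<in> ?G"
    then obtain A B where A: "A \<in> sets PX" "a = fst -` A \<inter> space (PX \<Otimes>\<^sub>M MSa)"
      and B: "B \<in> sets MSa" "b = snd -` B \<inter> space (PX \<Otimes>\<^sub>M MSa)"
      by auto
    have ab: "a = A \<times> space MSa" "b = space PX \<times> B"
      using A B sets.sets_into_space[OF A(1)] sets.sets_into_space[OF B(1)]
      by (auto simp: space_pair_measure)
    have prob_Times: "P.prob (A' \<times> B') = measure PX A' * measure MSa B'"
      if "A' \<in> sets PX" "B' \<in> sets MSa" for A' B'
      using that by (simp add: measure_def MSa.emeasure_pair_measure_Times enn2real_mult)
    moreover have "a \<inter> b = A \<times> B"
      using A B sets.sets_into_space[OF A(1)] sets.sets_into_space[OF B(1)]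
      by (auto simp: space_pair_measure)
    ultimately show "P.prob (a \<inter> b) = P.prob a * P.prob b"
      using A(1) B(1) ab prob_Times[of A B] prob_Times[of A "space MSa"] prob_Times[of "space PX" B]
        MSa.prob_space prob_space.prob_space[OF PX] by simp
  qed
  moreover have "Int_stable ?F" "Int_stable ?G"
    unfolding Int_stable_def
    by (safe; metis (no_types, lifting) sets.Int vimage_Int Int_assoc inf.left_idem inf_commute)+
  ultimately show ?thesis
    by (rule P.indep_set_sigma_sets)
qed

lemma is_rep_pair_measure:
  assumes PX: "prob_space PX" and MSa: "prob_space MSa" and g: "g \<in> measurable (PX \<Otimes>\<^sub>M MSa) MZ"
  shows "is_rep PX (PX \<Otimes>\<^sub>M MSa) fst MSa snd MZ g"
proof -
  interpret MSa: prob_space MSa by fact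
  interpret P: pair_prob_space PX MSa
    by (simp add: PX MSa pair_prob_space_def pair_sigma_finite_def prob_space_imp_sigma_finite)
  show ?thesis
    using indep_set_fst_snd[OF PX MSa] MSa.distr_pair_fst P.prob_space_axioms g
    by (simp add: is_rep_def)
qed

lemma mult_divide_eq_of_le: "0 \<le> y \<Longrightarrow> y \<le> x \<Longrightarrow> x * (y / x) = (y :: real)"
  by (cases "x = 0") auto

lemma (in finite_measure) measure_Collect_split:
  assumes "Measurable.pred M P" "Measurable.pred M Q"
  shows "measure M {x\<in>space M. P x}
           = measure M {x\<in>space M. P x \<and> Q x} + measure M {x\<in>space M. P x \<and> \<not> Q x}"
proof -
  have "{x\<in>space M. P x} = {x\<in>space M. P x \<and> Q x} \<union> {x\<in>space M. P x \<and> \<not> Q x}" by auto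
  moreover have "{x\<in>space M. P x \<and> Q x} \<in> sets M" "{x\<in>space M. P x \<and> \<not> Q x} \<in> sets M"
    using assms by measurable
  ultimately show ?thesis by (simp add: finite_measure_Union[symmetric] disjoint_iff)
qed

text \<open>
  Here a and b stand for P(Y | \<not>A) and P(Y | A). The law fair_law a b of Z does not depend on A,
  and fair_label A v is the value of Y revealed by Z = v together with A. fair_code draws Z from
  fair_law a b conditioned on fair_label A Z = Y, by thresholding a uniform variable.
\<close>

definition fair_law :: "real \<Rightarrow> real \<Rightarrow> real \<Rightarrow> real" where
  "fair_law a b v =
     (if v = 3 then min a b else if v = 2 then a - min a b else if v = 1 then b - min a b
      else if v = 0 then 1 - max a b else 0)"

definition fair_label :: "bool \<Rightarrow> real \<Rightarrow> bool" where
  "fair_label \<alpha> v \<longleftrightarrow> v = 3 \<or> (v = 1 \<and> \<alpha>) \<or> (v = 2 \<and> \<not> \<alpha>)"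

definition fair_code :: "real \<Rightarrow> real \<Rightarrow> bool \<Rightarrow> bool \<Rightarrow> real \<Rightarrow> real" where
  "fair_code a b \<alpha> \<beta> s =
     (if \<alpha> then
        if \<beta> then (if s \<le> min a b / b then 3 else 1)
        else (if s \<le> (a - min a b) / (1 - b) then 2 else 0)
      else
        if \<beta> then (if s \<le> min a b / a then 3 else 2)
        else (if s \<le> (b - min a b) / (1 - a) then 1 else 0))"

lemma fair_code_kernel:
  fixes \<alpha> \<beta> :: bool and v :: real
  assumes "0 \<le> a" "a \<le> 1" "0 \<le> b" "b \<le> 1"
  defines "r \<equiv> (if \<alpha> then b else a)"
  shows "(if \<beta> then r else 1 - r) * measure uniform_01 {s. fair_code a b \<alpha> \<beta> s = v}
           = (if fair_label \<alpha> v = \<beta> then fair_law a b v else 0)"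
proof -
  have threshold: "x * measure uniform_01 {s. (if s \<le> t / x then hi else lo) = v}
      = (if v = hi then t else 0) + (if v = lo then x - t else 0)"
    if "0 \<le> t" "t \<le> x" "hi \<noteq> lo" for x t hi lo :: real
  proof -
    have "0 \<le> t / x" "t / x \<le> 1"
      using that by (auto simp: divide_le_eq_1)
    from measure_uniform_01_threshold[OF this that(3)]
    show ?thesis
      using mult_divide_eq_of_le[of t x] that by (simp add: distrib_left right_diff_distrib)
  qed
  show ?thesis
    using assms threshold[of "min a b" b 3 1] threshold[of "a - min a b" "1 - b" 2 0]
      threshold[of "min a b" a 3 2] threshold[of "b - min a b" "1 - a" 1 0]
    by (cases \<alpha>; cases \<beta>) (auto simp: fair_code_def fair_label_def fair_law_def r_def)
qed

context
  fixes PX :: "'x measure" and fA fY :: "'x \<Rightarrow> bool"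
  assumes PX: "prob_space PX"
    and fA [measurable]: "fA \<in> measurable PX (count_space UNIV)"
    and fY [measurable]: "fY \<in> measurable PX (count_space UNIV)"
begin

interpretation PX: prob_space PX by (fact PX)

definition group_prob :: "bool \<Rightarrow> real" where
  "group_prob \<alpha> = measure PX {x\<in>space PX. fA x = \<alpha>}"

definition positive_rate :: "bool \<Rightarrow> real" where
  "positive_rate \<alpha> = measure PX {x\<in>space PX. fY x \<and> fA x = \<alpha>} / group_prob \<alpha>"

definition fair_rep :: "'x \<times> real \<Rightarrow> real" where
  "fair_rep \<omega> =
     fair_code (positive_rate False) (positive_rate True) (fA (fst \<omega>)) (fY (fst \<omega>)) (snd \<omega>)"

lemma positive_count_le: "measure PX {x\<in>space PX. fY x \<and> fA x = \<alpha>} \<le> group_prob \<alpha>"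
  unfolding group_prob_def by (rule PX.finite_measure_mono) (blast, measurable)

lemma positive_rate_bounds: "0 \<le> positive_rate \<alpha>" "positive_rate \<alpha> \<le> 1"
  using positive_count_le[of \<alpha>]
  by (auto simp: positive_rate_def group_prob_def divide_le_eq_1 less_le)

lemma cell_prob:
  "measure PX {x\<in>space PX. fA x = \<alpha> \<and> fY x = \<beta>}
     = group_prob \<alpha> * (if \<beta> then positive_rate \<alpha> else 1 - positive_rate \<alpha>)"
proof -
  have T: "measure PX {x\<in>space PX. fA x = \<alpha> \<and> fY x} = group_prob \<alpha> * positive_rate \<alpha>"
    using mult_divide_eq_of_le[OF _ positive_count_le] by (simp add: positive_rate_def conj_commute)
  have "group_prob \<alpha> = measure PX {x\<in>space PX. fA x = \<alpha> \<and> fY x}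
                         + measure PX {x\<in>space PX. fA x = \<alpha> \<and> \<not> fY x}"
    unfolding group_prob_def by (rule PX.measure_Collect_split) measurable
  then show ?thesis
    using T by (cases \<beta>) (auto simp: algebra_simps)
qed

lemma measurable_fair_rep [measurable]: "fair_rep \<in> borel_measurable (PX \<Otimes>\<^sub>M uniform_01)"
proof -
  have [measurable]: "snd \<in> borel_measurable (PX \<Otimes>\<^sub>M uniform_01)"
    using measurable_snd[of PX uniform_01]
      measurable_cong_sets[OF refl sets_uniform_01, of "PX \<Otimes>\<^sub>M uniform_01"] by simp
  show ?thesis
    unfolding fair_rep_def fair_code_def by measurable
qed

lemma fair_rep_cell:
  "measure (PX \<Otimes>\<^sub>M uniform_01)
     {\<omega>\<in>space (PX \<Otimes>\<^sub>M uniform_01). fA (fst \<omega>) = \<alpha> \<and> fY (fst \<omega>) = \<beta> \<and> fair_rep \<omega> = v}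
   = group_prob \<alpha>
     * (if fair_label \<alpha> v = \<beta> then fair_law (positive_rate False) (positive_rate True) v else 0)"
proof -
  interpret U: prob_space uniform_01 by (rule prob_space_uniform_01)
  let ?A = "{x\<in>space PX. fA x = \<alpha> \<and> fY x = \<beta>}"
  let ?B = "{s. fair_code (positive_rate False) (positive_rate True) \<alpha> \<beta> s = v}"
  have A_sets: "?A \<in> sets PX" by measurable
  have "fair_code (positive_rate False) (positive_rate True) \<alpha> \<beta> \<in> borel_measurable borel"
    unfolding fair_code_def by measurable
  then have "{s\<in>space borel. fair_code (positive_rate False) (positive_rate True) \<alpha> \<beta> s = v}
               \<in> sets borel"
    by measurable
  then have B_sets: "?B \<in> sets uniform_01" by simp
  have "{\<omega>\<in>space (PX \<Otimes>\<^sub>M uniform_01). fA (fst \<omega>) = \<alpha> \<and> fY (fst \<omega>) = \<beta> \<and> fair_rep \<omega> = v}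
          = ?A \<times> ?B"
    by (auto simp: space_pair_measure fair_rep_def)
  then have "measure (PX \<Otimes>\<^sub>M uniform_01)
      {\<omega>\<in>space (PX \<Otimes>\<^sub>M uniform_01). fA (fst \<omega>) = \<alpha> \<and> fY (fst \<omega>) = \<beta> \<and> fair_rep \<omega> = v}
      = measure PX ?A * measure uniform_01 ?B"
    by (simp add: measure_def U.emeasure_pair_measure_Times[OF A_sets B_sets] enn2real_mult)
  also have "\<dots> = group_prob \<alpha>
      * ((if \<beta> then positive_rate \<alpha> else 1 - positive_rate \<alpha>) * measure uniform_01 ?B)"
    by (simp add: cell_prob)
  also have "(if \<beta> then positive_rate \<alpha> else 1 - positive_rate \<alpha>) * measure uniform_01 ?B
      = (if fair_label \<alpha> v = \<beta> then fair_law (positive_rate False) (positive_rate True) v else 0)"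
  proof -
    have r: "(if \<alpha> then positive_rate True else positive_rate False) = positive_rate \<alpha>"
      by (cases \<alpha>) simp_all
    show ?thesis
      using fair_code_kernel[where \<alpha>=\<alpha> and \<beta>=\<beta> and v=v,
          OF positive_rate_bounds(1,2)[of False] positive_rate_bounds(1,2)[of True]]
      unfolding r .
  qed
  finally show ?thesis .
qed

lemma group_prob_False: "group_prob False = 1 - group_prob True"
  using PX.prob_neg[of fA] by (simp add: group_prob_def)

lemma
  defines "D \<equiv> fair_law (positive_rate False) (positive_rate True)"
  shows fair_rep_group: "measure (PX \<Otimes>\<^sub>M uniform_01)
      {\<omega>\<in>space (PX \<Otimes>\<^sub>M uniform_01). fA (fst \<omega>) = \<alpha> \<and> fair_rep \<omega> = v} = group_prob \<alpha> * D v"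
    and fair_rep_law: "measure (PX \<Otimes>\<^sub>M uniform_01)
      {\<omega>\<in>space (PX \<Otimes>\<^sub>M uniform_01). fair_rep \<omega> = v} = D v"
    and fair_rep_positive: "measure (PX \<Otimes>\<^sub>M uniform_01)
      {\<omega>\<in>space (PX \<Otimes>\<^sub>M uniform_01). fY (fst \<omega>) \<and> fair_rep \<omega> = v}
      = ((if fair_label True v then group_prob True else 0)
         + (if fair_label False v then group_prob False else 0)) * D v"
proof -
  interpret U: prob_space uniform_01 by (rule prob_space_uniform_01)
  interpret P: pair_prob_space PX uniform_01 ..
  let ?M = "PX \<Otimes>\<^sub>M uniform_01"
  have split: "measure ?M {\<omega>\<in>space ?M. P \<omega>}
      = measure ?M {\<omega>\<in>space ?M. P \<omega> \<and> Q \<omega>} + measure ?M {\<omega>\<in>space ?M. P \<omega> \<and> \<not> Q \<omega>}"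
    if "Measurable.pred ?M P" "Measurable.pred ?M Q" for P Q
    using P.measure_Collect_split[OF that] .
  show group: "measure ?M {\<omega>\<in>space ?M. fA (fst \<omega>) = \<alpha> \<and> fair_rep \<omega> = v} = group_prob \<alpha> * D v" for \<alpha>
    using split[of "\<lambda>\<omega>. fA (fst \<omega>) = \<alpha> \<and> fair_rep \<omega> = v" "\<lambda>\<omega>. fY (fst \<omega>)"]
      fair_rep_cell[of \<alpha> True v] fair_rep_cell[of \<alpha> False v]
    by (simp add: conj_ac D_def distrib_left[symmetric])
  show "measure ?M {\<omega>\<in>space ?M. fair_rep \<omega> = v} = D v"
    using split[of "\<lambda>\<omega>. fair_rep \<omega> = v" "\<lambda>\<omega>. fA (fst \<omega>)"] group[of True] group[of False]
    by (simp add: conj_ac group_prob_False algebra_simps)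
  show "measure ?M {\<omega>\<in>space ?M. fY (fst \<omega>) \<and> fair_rep \<omega> = v}
      = ((if fair_label True v then group_prob True else 0)
         + (if fair_label False v then group_prob False else 0)) * D v"
    using split[of "\<lambda>\<omega>. fY (fst \<omega>) \<and> fair_rep \<omega> = v" "\<lambda>\<omega>. fA (fst \<omega>)"]
      fair_rep_cell[of True True v] fair_rep_cell[of False True v]
    by (simp add: conj_ac D_def algebra_simps)
qed

lemma fair_rep_optimal:
  "\<exists>(M :: ('x \<times> real) measure) X (MSa :: real measure) S (MZ :: real measure) g.
     is_rep PX M X MSa S MZ g \<and> MI_rep M X S MZ g fA = 0 \<and>
     MI_rep M X S MZ g fY = H2 PX fY - Delta PX fA fY * H2 PX fA"
proof (intro exI conjI)
  interpret U: prob_space uniform_01 by (rule prob_space_uniform_01)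
  interpret P: pair_prob_space PX uniform_01 ..
  let ?M = "PX \<Otimes>\<^sub>M uniform_01" and ?R = "{0, 1, 2, 3 :: real}"
  let ?a = "positive_rate False" and ?b = "positive_rate True" and ?pA = "group_prob True"
  let ?D = "fair_law ?a ?b"
  show "is_rep PX ?M fst uniform_01 snd borel fair_rep"
    by (rule is_rep_pair_measure[OF PX prob_space_uniform_01 measurable_fair_rep])
  have range: "fair_rep \<omega> \<in> ?R" for \<omega>
    by (simp add: fair_rep_def fair_code_def)
  have marginal: "measure ?M {\<omega>\<in>space ?M. f (fst \<omega>)} = measure PX {x\<in>space PX. f x}"
    if [measurable]: "f \<in> measurable PX (count_space UNIV)" for f
    by (rule measure_Collect_distr_eq[OF measurable_fst U.distr_pair_fst, symmetric]) measurable
  have MI: "MI_rep ?M fst snd borel fair_rep f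
      = binary_entropy (measure PX {x\<in>space PX. f x})
        - (\<Sum>v\<in>?R. ?D v * binary_entropy (c v))"
    if [measurable]: "f \<in> measurable PX (count_space UNIV)"
      and "\<And>v. 0 \<le> c v \<and> c v \<le> 1"
      and "\<And>v. measure ?M {\<omega>\<in>space ?M. f (fst \<omega>) \<and> fair_rep \<omega> = v} = c v * ?D v"
    for f c
    using mutual_information_bool_finite_range[OF P.prob_space_axioms measurable_fair_rep _ _ range,
        of "\<lambda>\<omega>. f (fst \<omega>)" c] that
    by (simp add: MI_rep_def marginal fair_rep_law)
  have D_sum: "(\<Sum>v\<in>?R. ?D v) = 1"
    by (simp add: fair_law_def)
  have pA: "0 \<le> ?pA" "?pA \<le> 1" by (simp_all add: group_prob_def)
  show "MI_rep ?M fst snd borel fair_rep fA = 0"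
    using MI[OF fA, of "\<lambda>_. ?pA"] D_sum pA fair_rep_group[of True]
    by (simp add: group_prob_def sum_distrib_right[symmetric])
  have "MI_rep ?M fst snd borel fair_rep fY
      = binary_entropy (measure PX {x\<in>space PX. fY x}) - (?D 1 + ?D 2) * binary_entropy ?pA"
    using MI[OF fY, of "\<lambda>v. (if fair_label True v then ?pA else 0)
        + (if fair_label False v then group_prob False else 0)"] fair_rep_positive pA
    by (simp add: group_prob_False fair_label_def binary_entropy_one_minus algebra_simps)
  also have "?D 1 + ?D 2 = \<bar>?a - ?b\<bar>"
    by (simp add: fair_law_def min_def)
  finally show "MI_rep ?M fst snd borel fair_rep fY = H2 PX fY - Delta PX fA fY * H2 PX fA"
    by (simp add: H2_eq_binary_entropy[OF PX] Delta_def positive_rate_def group_prob_def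
        group_prob_False)
qed

end

theorem theorem1:
  fixes PX :: "'x measure" and fA fY :: "'x \<Rightarrow> bool"
  assumes "prob_space PX"
    and "fA \<in> measurable PX (count_space UNIV)"
    and "fY \<in> measurable PX (count_space UNIV)"
  shows "(\<forall>(M :: 'm measure) X (MSa :: 's measure) S (MZ :: 'z measure) g.
            is_rep PX M X MSa S MZ g \<and> MI_rep M X S MZ g fA = 0 \<longrightarrow>
            MI_rep M X S MZ g fY \<le> H2 PX fY - Delta PX fA fY * H2 PX fA)
       \<and> (\<exists>(M :: ('x \<times> real) measure) X (MSa :: real measure) S (MZ :: real measure) g.
            is_rep PX M X MSa S MZ g \<and> MI_rep M X S MZ g fA = 0 \<and>
            MI_rep M X S MZ g fY = H2 PX fY - Delta PX fA fY * H2 PX fA)"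
proof (intro conjI allI impI)
  note fA [measurable] = assms(2) and fY [measurable] = assms(3)
  fix M :: "'m measure" and X and MSa :: "'s measure" and S and MZ :: "'z measure" and g
  assume "is_rep PX M X MSa S MZ g \<and> MI_rep M X S MZ g fA = 0"
  then have M: "prob_space M" and X [measurable]: "X \<in> measurable M PX"
    and PX: "distr M PX X = PX" and [measurable]: "S \<in> measurable M MSa"
    and [measurable]: "g \<in> measurable (PX \<Otimes>\<^sub>M MSa) MZ" and MI_A: "MI_rep M X S MZ g fA = 0"
    by (simp_all add: is_rep_def)
  have Z: "(\<lambda>\<omega>. g (X \<omega>, S \<omega>)) \<in> measurable M MZ" by measurable
  have A: "(\<lambda>\<omega>. fA (X \<omega>)) \<in> measurable M (count_space UNIV)" by measurable
  have Y: "(\<lambda>\<omega>. fY (X \<omega>)) \<in> measurable M (count_space UNIV)" by measurable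
  show "MI_rep M X S MZ g fY \<le> H2 PX fY - Delta PX fA fY * H2 PX fA"
    using mutual_information_le_of_mutual_information_eq_0[OF M Z A Y] MI_A
    by (simp add: MI_rep_def H2_distr[OF M X PX] Delta_distr[OF X PX])
next
  show "\<exists>(M :: ('x \<times> real) measure) X (MSa :: real measure) S (MZ :: real measure) g.
          is_rep PX M X MSa S MZ g \<and> MI_rep M X S MZ g fA = 0 \<and>
          MI_rep M X S MZ g fY = H2 PX fY - Delta PX fA fY * H2 PX fA"
    by (rule fair_rep_optimal[OF assms])
qed

end
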